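(* Let $V,W$ be Euclidean spaces, $v_1,v_2,v_3\in V$, $w_1,w_2,w_3\in W$, and put $\alpha=v_1\otimes w_1$, $\beta=v_2\otimes w_2$, $\gamma=v_3\otimes w_3$ in $V\otimes W$. Then \begin{align*} |\alpha\wedge\beta\wedge\gamma|^2 &= |v_1|^2|v_2|^2|v_3|^2|w_1\wedge w_2\wedge w_3|^2+|v_1\wedge v_2\wedge v_3|^2|w_1|^2|w_2|^2|w_3|^2\\ &\quad-\tfrac12\sum_{i=1}^3|v_i|^2|v_{i'}\wedge v_{i''}|^2|w_i|^2|w_{i'}\wedge w_{i''}|^2 +\tfrac12\sum_{i\ne j}|v_i|^2|v_{i'}\wedge v_{i''}|^2|w_j|^2|w_{j'}\wedge w_{j''}|^2\\ &\quad-\tfrac12\sum_{i=1}^3|v_i|^2|v_{i'}\wedge v_{i''}|^2|w_1\wedge w_2\wedge w_3|^2 -\tfrac12\sum_{i=1}^3|v_1\wedge v_2\wedge v_3|^2|w_i|^2|w_{i'}\wedge w_{i''}|^2\\ &\quad+\tfrac12|v_1\wedge v_2\wedge v_3|^2|w_1\wedge w_2\wedge w_3|^2, \end{align*} where for each index $i\in\{1,2,3\}$, $\{i',i''\}$ denotes the two indices complementary to $i$ (and likewise for $j$), and the sum $\sum_{i\neq j}$ runs over ordered pairs $(i,j)$ with $i,j\in\{1,2,3\}$, $i\ne j$.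
   Context: $V\otimes W$ carries the inner product $(v\otimes w,v'\otimes w')=(v,v')(w,w')$. For vectors $x_1,\dots,x_k$ in a Euclidean space, $|x_1\wedge\cdots\wedge x_k|^2=\det\big((x_i,x_j)\big)_{i,j}$ (the squared $k$-dimensional volume of the parallelepiped they span), i.e. the norm in $\bigwedge^k$ with the inner product $(x_1\wedge\cdots\wedge x_k,y_1\wedge\cdots\wedge y_k)=\sum_{\sigma\in S_k}\mathrm{sgn}(\sigma)\prod_i (x_i,y_{\sigma(i)})$. *)

theory Defs
  imports "HOL-Analysis.Analysis"
begin

text \<open>Squared norm of a wedge product x_1 ... x_k, via the Gram determinant
  sum over sigma in S_k of sgn(sigma) * prod_i (x_i, x_sigma(i)).\<close>
definition wedge_sq :: "'a::real_inner list \<Rightarrow> real" where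
  "wedge_sq xs = (\<Sum>\<sigma>\<in>{p. p permutes {..<length xs}}.
      of_int (sign \<sigma>) * (\<Prod>i<length xs. inner (xs ! i) (xs ! (\<sigma> i))))"

text \<open>Tensor product of V = R^m and W = R^n realised as R^(m x n), whose Euclidean
  inner product satisfies (v (x) w, v' (x) w') = (v,v')(w,w').\<close>
definition tensor :: "real^'m \<Rightarrow> real^'n \<Rightarrow> real^('m \<times> 'n)" where
  "tensor v w = (\<chi> p. v $ fst p * w $ snd p)"

definition c1 :: "nat \<Rightarrow> nat" where "c1 i = (if i = 1 then 2 else 1)"
definition c2 :: "nat \<Rightarrow> nat" where "c2 i = (if i = 3 then 2 else 3)"

end

theory Submission
  imports Defs
begin

text \<open>The Gram matrix of \<open>v\<^sub>i \<otimes> w\<^sub>i\<close> is the entrywise product of the Gram matrices of the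
  \<open>v\<^sub>i\<close> and of the \<open>w\<^sub>i\<close>. Expanding every Gram determinant in the statement into
  its entries therefore turns the identity into a polynomial identity in the inner products
  \<open>(v\<^sub>i, v\<^sub>j)\<close> and \<open>(w\<^sub>i, w\<^sub>j)\<close>, which holds by ring normalisation.\<close>

lemma wedge_sq_two:
  fixes a b :: "'a::real_inner"
  shows "wedge_sq [a, b] = inner a a * inner b b - (inner a b)\<^sup>2"
proof -
  have fin: "finite {1::nat}" "0 \<notin> {1::nat}" by auto
  have idx: "{..<length [a, b]} = insert 0 {1::nat}" by auto
  show ?thesis
    unfolding wedge_sq_def idx sum_over_permutations_insert[OF fin] permutes_sing
    by (simp add: sign_swap_id sign_id swap_id_eq lessThan_Suc inner_commute power2_eq_square)
qed

lemma wedge_sq_three: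
  fixes a b c :: "'a::real_inner"
  shows "wedge_sq [a, b, c] =
      inner a a * inner b b * inner c c + 2 * inner a b * inner b c * inner a c
    - inner a a * (inner b c)\<^sup>2 - inner b b * (inner a c)\<^sup>2 - inner c c * (inner a b)\<^sup>2"
proof -
  have fin: "finite {1::nat, 2}" "0 \<notin> {1::nat, 2}" by auto
  have fin': "finite {2::nat}" "1 \<notin> {2::nat}" by auto
  have idx: "{..<length [a, b, c]} = insert 0 {1::nat, 2}" by auto
  show ?thesis
    unfolding wedge_sq_def idx sum_over_permutations_insert[OF fin]
      sum_over_permutations_insert[OF fin'] permutes_sing
    by (simp add: sign_swap_id permutation_swap_id sign_compose sign_id swap_id_eq lessThan_Suc
        eval_nat_numeral inner_commute power2_eq_square algebra_simps)
qed

lemma inner_tensor: "inner (tensor v w) (tensor v' w') = inner v v' * inner w w'"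
proof -
  have "inner (tensor v w) (tensor v' w') =
      (\<Sum>p\<in>UNIV \<times> UNIV. v $ fst p * v' $ fst p * (w $ snd p * w' $ snd p))"
    unfolding tensor_def inner_vec_def by (simp add: algebra_simps)
  also have "\<dots> = (\<Sum>i\<in>UNIV. \<Sum>j\<in>UNIV. v $ i * v' $ i * (w $ j * w' $ j))"
    by (simp add: sum.cartesian_product split_def)
  also have "\<dots> = inner v v' * inner w w'"
    unfolding inner_vec_def by (simp add: sum_product)
  finally show ?thesis .
qed

theorem lemma2:
  fixes v :: "nat \<Rightarrow> real^'m" and w :: "nat \<Rightarrow> real^'n"
  shows "wedge_sq [tensor (v 1) (w 1), tensor (v 2) (w 2), tensor (v 3) (w 3)] =
      (norm (v 1))^2 * (norm (v 2))^2 * (norm (v 3))^2 * wedge_sq [w 1, w 2, w 3]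
    + wedge_sq [v 1, v 2, v 3] * (norm (w 1))^2 * (norm (w 2))^2 * (norm (w 3))^2
    - 1/2 * (\<Sum>i\<in>{1,2,3}. (norm (v i))^2 * wedge_sq [v (c1 i), v (c2 i)]
                            * (norm (w i))^2 * wedge_sq [w (c1 i), w (c2 i)])
    + 1/2 * (\<Sum>(i,j)\<in>{(i,j). i \<in> {1,2,3} \<and> j \<in> {1::nat,2,3} \<and> i \<noteq> j}.
               (norm (v i))^2 * wedge_sq [v (c1 i), v (c2 i)]
             * (norm (w j))^2 * wedge_sq [w (c1 j), w (c2 j)])
    - 1/2 * (\<Sum>i\<in>{1,2,3}. (norm (v i))^2 * wedge_sq [v (c1 i), v (c2 i)]
                            * wedge_sq [w 1, w 2, w 3])
    - 1/2 * (\<Sum>i\<in>{1,2,3}. wedge_sq [v 1, v 2, v 3]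
                            * (norm (w i))^2 * wedge_sq [w (c1 i), w (c2 i)])
    + 1/2 * wedge_sq [v 1, v 2, v 3] * wedge_sq [w 1, w 2, w 3]"
proof -
  have ordered_pairs: "{(i,j). i \<in> {1,2,3} \<and> j \<in> {1::nat,2,3} \<and> i \<noteq> j} =
      {(1,2), (1,3), (2,1), (2,3), (3,1), (3,2)}"
    by auto
  show ?thesis
    unfolding wedge_sq_two wedge_sq_three inner_tensor power2_norm_eq_inner ordered_pairs
    by (simp add: c1_def c2_def inner_commute power2_eq_square algebra_simps)
qed

end
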